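(* Let $H=(S_1,\dots,S_\ell)$ be a partial route and $\xi\in[N]$. Then there exists an optimal solution $(\bar\alpha,\bar\beta)$ of the dual of the linear program $$\mathcal{L}^*_\xi(H)=\min\Big\{\sum_{v\in V_+(H)}w_vy_v:\ y(V_+(H'))\ge k_\xi(V_+(H'))-1\ (H'\subseteq H),\ y_v\le b_v\ (v\in V_+),\ y\ge0\Big\},$$ where $\bar\alpha_{H'}\ge0$ is the multiplier of the constraint for $H'$ and $\bar\beta_v\le0$ that of $y_v\le b_v$, such that $\sum_{H'\subseteq H}\bar\alpha_{H'}\le\mathcal{L}^*_\xi(H)$ and $\sum_{H'\subseteq H:\,v\in V_+(H')}\bar\alpha_{H'}+\bar\beta_v\le0$ for every $v\in V_+$ with $w_v=0$.
   Context: $G=(V,E)$ complete undirected graph with $V=\{0\}\cup V_+$ ($V_+$ customers); $D=(V,A)$ replaces each edge by two opposite arcs. Capacity $C>0$; scenario demands $d^\xi\in\mathbb{Q}^{V_+}_{\ge0}$ with $d^\xi(v)\le C$. $f(S)=\sum_{i\in S}f(i)$, $k_\xi(S)=\lceil d^\xi(S)/C\rceil$. Fixed $w\in\mathbb{Q}^{V_+}_{\ge0}$ and $b\in\mathbb{Z}^{V_+}_{\ge0}$ such that for every route $R=(v_1,\dots,v_m)$ (cycle $0,v_1,\dots,v_m,0$ through distinct customers, $v_0=v_{m+1}=0$) and every scenario $\xi$ there is an integer vector $y\in[0,b]$ for which there exist $f_{(v_{i-1},v_i)}\in[0,C]$ and $g_{v_i}\ge0$ with $f_{(v_{i-1},v_i)}+d^\xi(v_i)=f_{(v_i,v_{i+1})}+g_{v_i}$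 and $g_{v_i}\le Cy_{v_i}$ for all $i\in[m]$. A partial route $H=(S_1,\dots,S_\ell)$ is a tuple of pairwise disjoint nonempty subsets of $V_+$ with no index $i$ such that both $S_i$ and $S_{i+1}$ have more than one element; $V_+(H)=\bigcup_iS_i$; $H'\subseteq H$ means $H'=(S_i,\dots,S_j)$ with $1\le i\le j\le\ell$. *)

theory Defs
  imports Complex_Main
begin

(* Customers V_+ are a finite set Vp :: 'a set; the depot 0 is implicit.
   Demands of scenario xi: d xi :: 'a => real.  Scenarios are {1..N}. *)

definition kcap :: "real \<Rightarrow> ('a \<Rightarrow> real) \<Rightarrow> 'a set \<Rightarrow> int" where
  "kcap C dx S = \<lceil>sum dx S / C\<rceil>"

definition is_route :: "'a set \<Rightarrow> 'a list \<Rightarrow> bool" where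
  "is_route Vp vs \<longleftrightarrow> vs \<noteq> [] \<and> distinct vs \<and> set vs \<subseteq> Vp"

(* flows: f i is the flow on arc (v_i, v_{i+1}), i = 0..m, with v_0 = v_{m+1} = depot;
   g i is the value g_{v_i}, i = 1..m; v_i = vs ! (i - 1) *)
definition route_flow_ok ::
  "real \<Rightarrow> ('a \<Rightarrow> real) \<Rightarrow> 'a list \<Rightarrow> ('a \<Rightarrow> nat) \<Rightarrow> bool" where
  "route_flow_ok C dx vs y \<longleftrightarrow>
     (\<exists>f g :: nat \<Rightarrow> real.
        (\<forall>i\<le>length vs. 0 \<le> f i \<and> f i \<le> C) \<and>
        (\<forall>i\<in>{1..length vs}.
            f (i - 1) + dx (vs ! (i - 1)) = f i + g i \<and> 0 \<le> g i \<and>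
            g i \<le> C * real (y (vs ! (i - 1)))))"

definition partial_route :: "'a set \<Rightarrow> 'a set list \<Rightarrow> bool" where
  "partial_route Vp H \<longleftrightarrow>
     (\<forall>S\<in>set H. S \<noteq> {} \<and> S \<subseteq> Vp) \<and>
     (\<forall>i<length H. \<forall>j<length H. i \<noteq> j \<longrightarrow> H ! i \<inter> H ! j = {}) \<and>
     \<not> (\<exists>i. Suc i < length H \<and> card (H ! i) > 1 \<and> card (H ! Suc i) > 1)"

(* sub-partial-routes H' = (S_i,...,S_j), encoded by 0-based index pairs (i,j) *)
definition subs :: "'a set list \<Rightarrow> (nat \<times> nat) set" where
  "subs H = {(i, j). i \<le> j \<and> j < length H}"

definition Vsub :: "'a set list \<Rightarrow> nat \<times> nat \<Rightarrow> 'a set" where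
  "Vsub H p = (\<Union>t\<in>{fst p..snd p}. H ! t)"

definition VH :: "'a set list \<Rightarrow> 'a set" where
  "VH H = \<Union> (set H)"

definition primal_feas ::
  "'a set \<Rightarrow> real \<Rightarrow> ('a \<Rightarrow> real) \<Rightarrow> ('a \<Rightarrow> nat) \<Rightarrow> 'a set list \<Rightarrow> ('a \<Rightarrow> real) \<Rightarrow> bool" where
  "primal_feas Vp C dx b H y \<longleftrightarrow>
     (\<forall>p\<in>subs H. sum y (Vsub H p) \<ge> real_of_int (kcap C dx (Vsub H p)) - 1) \<and>
     (\<forall>v\<in>Vp. y v \<le> real (b v) \<and> 0 \<le> y v)"

definition Lstar ::
  "'a set \<Rightarrow> real \<Rightarrow> ('a \<Rightarrow> real) \<Rightarrow> ('a \<Rightarrow> nat) \<Rightarrow> ('a \<Rightarrow> real) \<Rightarrow> 'a set list \<Rightarrow> real" where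
  "Lstar Vp C dx b w H = Inf ((\<lambda>y. \<Sum>v\<in>VH H. w v * y v) ` {y. primal_feas Vp C dx b H y})"

definition dual_feas ::
  "'a set \<Rightarrow> ('a \<Rightarrow> real) \<Rightarrow> 'a set list \<Rightarrow> (nat \<times> nat \<Rightarrow> real) \<Rightarrow> ('a \<Rightarrow> real) \<Rightarrow> bool" where
  "dual_feas Vp w H \<alpha> \<beta> \<longleftrightarrow>
     (\<forall>p\<in>subs H. 0 \<le> \<alpha> p) \<and> (\<forall>v\<in>Vp. \<beta> v \<le> 0) \<and>
     (\<forall>v\<in>Vp. (\<Sum>p\<in>{p\<in>subs H. v \<in> Vsub H p}. \<alpha> p) + \<beta> v
               \<le> (if v \<in> VH H then w v else 0))"

definition dual_obj ::
  "'a set \<Rightarrow> real \<Rightarrow> ('a \<Rightarrow> real) \<Rightarrow> ('a \<Rightarrow> nat) \<Rightarrow> 'a set list \<Rightarrow> (nat \<times> nat \<Rightarrow> real) \<Rightarrow> ('a \<Rightarrow> real) \<Rightarrow> real" where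
  "dual_obj Vp C dx b H \<alpha> \<beta> =
     (\<Sum>p\<in>subs H. \<alpha> p * (real_of_int (kcap C dx (Vsub H p)) - 1)) + (\<Sum>v\<in>Vp. \<beta> v * real (b v))"

definition dual_opt ::
  "'a set \<Rightarrow> real \<Rightarrow> ('a \<Rightarrow> real) \<Rightarrow> ('a \<Rightarrow> nat) \<Rightarrow> ('a \<Rightarrow> real) \<Rightarrow> 'a set list \<Rightarrow> (nat \<times> nat \<Rightarrow> real) \<Rightarrow> ('a \<Rightarrow> real) \<Rightarrow> bool" where
  "dual_opt Vp C dx b w H \<alpha> \<beta> \<longleftrightarrow>
     dual_feas Vp w H \<alpha> \<beta> \<and>
     (\<forall>\<alpha>' \<beta>'. dual_feas Vp w H \<alpha>' \<beta>' \<longrightarrow> dual_obj Vp C dx b H \<alpha>' \<beta>' \<le> dual_obj Vp C dx b H \<alpha> \<beta>)"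

end

theory Submission
  imports Defs "HOL-Analysis.Analysis"
begin

(*
  For fixed \<alpha> the best multipliers are \<beta>_v = min 0 (w_v - load_v \<alpha>), where load_v \<alpha> is the
  total weight \<alpha> puts on the subroutes containing v; so the dual asks to maximise a concave
  piecewise linear function F(\<alpha>) over \<alpha> \<ge> 0. The route hypothesis says that every set T of
  customers can be served by one route, whence k(T) - 1 \<le> b(T), i.e. y = b is primal feasible.
  Consequently capping \<alpha> at \<Sum>w never decreases F, so F attains its maximum, and among the
  maximisers we pick one with least \<Sum>\<alpha>. Lowering a positive \<alpha>_H' by a small \<epsilon> changes F by
  at least \<epsilon> (b(T) - k(H') + 1), where T are the customers of H' with \<beta>_v < 0; minimality of \<Sum>\<alpha>
  thus forces b(T) \<le> k(H') - 2. Weighting these inequalities by \<alpha> gives \<Sum>\<alpha> \<le> F(\<alpha>), and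
  F(\<alpha>) \<le> L* by weak duality.
*)

lemma route_flow_ok_demand_le:
  assumes flow: "route_flow_ok C dx vs y" and "distinct vs"
  shows "sum dx (set vs) \<le> C + C * real (sum y (set vs))"
proof -
  define m where "m = length vs"
  obtain f g :: "nat \<Rightarrow> real" where
    f: "\<forall>i\<le>m. 0 \<le> f i \<and> f i \<le> C" and
    g: "\<forall>i\<in>{1..m}. f (i - 1) + dx (vs ! (i - 1)) = f i + g i \<and> 0 \<le> g i \<and>
          g i \<le> C * real (y (vs ! (i - 1)))"
    using flow unfolding route_flow_ok_def m_def by blast
  have sum_over_nth: "(\<Sum>i<m. h (vs ! i)) = sum h (set vs)" for h :: "'a \<Rightarrow> real"
    unfolding m_def using sum.reindex_bij_betw[OF bij_betw_nth[OF \<open>distinct vs\<close> refl refl]] .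
  have step: "dx (vs ! i) = (f (Suc i) - f i) + g (Suc i) \<and> g (Suc i) \<le> C * real (y (vs ! i))"
    if "i < m" for i
  proof -
    have "Suc i \<in> {1..m}"
      using that by simp
    then show ?thesis
      using g by fastforce
  qed
  have "sum dx (set vs) = (\<Sum>i<m. (f (Suc i) - f i) + g (Suc i))"
    unfolding sum_over_nth[symmetric] using step by simp
  also have "\<dots> = f m - f 0 + (\<Sum>i<m. g (Suc i))"
    by (simp add: sum.distrib sum_lessThan_telescope)
  also have "\<dots> \<le> C + (\<Sum>i<m. C * real (y (vs ! i)))"
  proof (intro add_mono sum_mono)
    have "0 \<le> f 0" "f m \<le> C"
      using f by auto
    then show "f m - f 0 \<le> C"
      by linarith
  qed (use step in auto)
  also have "\<dots> = C + C * real (sum y (set vs))"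
    by (simp flip: sum_distrib_left sum_over_nth)
  finally show ?thesis .
qed

lemma kcap_minus_one_le_sum_bound:
  assumes "C > 0" "finite T" "T \<noteq> {}" "T \<subseteq> Vp"
    and route: "\<And>vs. is_route Vp vs \<Longrightarrow>
      \<exists>y :: 'a \<Rightarrow> nat. (\<forall>v\<in>Vp. y v \<le> b v) \<and> route_flow_ok C dx vs y"
  shows "real_of_int (kcap C dx T) - 1 \<le> real (sum b T)"
proof -
  obtain vs where vs: "set vs = T" "distinct vs"
    using finite_distinct_list[OF \<open>finite T\<close>] by blast
  then have "is_route Vp vs"
    using assms unfolding is_route_def by auto
  then obtain y :: "'a \<Rightarrow> nat" where y: "\<forall>v\<in>Vp. y v \<le> b v" and "route_flow_ok C dx vs y"
    using route by blast
  then have "sum dx T \<le> C + C * real (sum y T)"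
    using route_flow_ok_demand_le vs by blast
  also have "\<dots> \<le> C + C * real (sum b T)"
    using y \<open>T \<subseteq> Vp\<close> \<open>C > 0\<close> by (auto intro!: sum_mono)
  finally have "sum dx T / C \<le> real (sum b T) + 1"
    using \<open>C > 0\<close> by (simp add: divide_le_eq algebra_simps)
  then have "kcap C dx T \<le> int (sum b T) + 1"
    unfolding kcap_def by (simp add: ceiling_le_iff)
  then show ?thesis
    by linarith
qed

lemma finite_subs [simp]: "finite (subs H)"
proof -
  have "subs H \<subseteq> {..<length H} \<times> {..<length H}"
    unfolding subs_def by auto
  then show ?thesis
    by (rule finite_subset) auto
qed

lemma Vsub_subset_VH: "p \<in> subs H \<Longrightarrow> Vsub H p \<subseteq> VH H"
  unfolding subs_def Vsub_def VH_def by auto (meson le_less_trans nth_mem)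

locale partial_route_lp =
  fixes Vp :: "'a set" and C :: real and dx :: "'a \<Rightarrow> real" and b :: "'a \<Rightarrow> nat"
    and w :: "'a \<Rightarrow> real" and H :: "'a set list"
  assumes finite_Vp: "finite Vp"
    and blocks: "S \<in> set H \<Longrightarrow> S \<noteq> {} \<and> S \<subseteq> Vp"
    and w_nonneg: "v \<in> Vp \<Longrightarrow> 0 \<le> w v"
    and capacity_bound: "T \<subseteq> Vp \<Longrightarrow> T \<noteq> {} \<Longrightarrow> real_of_int (kcap C dx T) - 1 \<le> real (sum b T)"
begin

definition rhs :: "nat \<times> nat \<Rightarrow> real" where
  "rhs p = real_of_int (kcap C dx (Vsub H p)) - 1"

definition load :: "(nat \<times> nat \<Rightarrow> real) \<Rightarrow> 'a \<Rightarrow> real" where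
  "load \<alpha> v = (\<Sum>p\<in>{p\<in>subs H. v \<in> Vsub H p}. \<alpha> p)"

definition cost :: "'a \<Rightarrow> real" where
  "cost v = (if v \<in> VH H then w v else 0)"

definition best_beta :: "(nat \<times> nat \<Rightarrow> real) \<Rightarrow> 'a \<Rightarrow> real" where
  "best_beta \<alpha> v = min 0 (cost v - load \<alpha> v)"

definition dual_value :: "(nat \<times> nat \<Rightarrow> real) \<Rightarrow> real" where
  "dual_value \<alpha> = (\<Sum>p\<in>subs H. \<alpha> p * rhs p) + (\<Sum>v\<in>Vp. best_beta \<alpha> v * real (b v))"

definition overcharged :: "(nat \<times> nat \<Rightarrow> real) \<Rightarrow> nat \<times> nat \<Rightarrow> 'a set" where
  "overcharged \<alpha> p = {v\<in>Vsub H p. cost v < load \<alpha> v}"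

lemma VH_subset: "VH H \<subseteq> Vp"
  using blocks unfolding VH_def by blast

lemma Vsub_subset: "p \<in> subs H \<Longrightarrow> Vsub H p \<subseteq> Vp"
  using Vsub_subset_VH VH_subset by blast

lemma finite_Vsub: "p \<in> subs H \<Longrightarrow> finite (Vsub H p)"
  using Vsub_subset finite_Vp finite_subset by blast

lemma Vsub_nonempty:
  assumes "p \<in> subs H"
  shows "Vsub H p \<noteq> {}"
proof -
  have "fst p < length H" "H ! fst p \<subseteq> Vsub H p"
    using assms unfolding subs_def Vsub_def by auto
  then show ?thesis
    using blocks[OF nth_mem] by blast
qed

lemma rhs_le_sum_b: "p \<in> subs H \<Longrightarrow> rhs p \<le> real (sum b (Vsub H p))"
  unfolding rhs_def by (rule capacity_bound[OF Vsub_subset Vsub_nonempty])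

lemma cost_nonneg: "0 \<le> cost v"
  using w_nonneg VH_subset unfolding cost_def by auto

lemma sum_mult_load:
  "(\<Sum>v\<in>Vp. c v * load \<alpha> v) = (\<Sum>p\<in>subs H. \<alpha> p * sum c (Vsub H p))"
proof -
  have "(\<Sum>v\<in>Vp. c v * load \<alpha> v) = (\<Sum>v\<in>Vp. \<Sum>p\<in>{p\<in>subs H. v \<in> Vsub H p}. \<alpha> p * c v)"
    unfolding load_def by (simp add: sum_distrib_left mult.commute)
  also have "\<dots> = (\<Sum>p\<in>subs H. \<Sum>v\<in>{v\<in>Vp. v \<in> Vsub H p}. \<alpha> p * c v)"
    by (rule sum.swap_restrict[OF finite_Vp finite_subs])
  also have "\<dots> = (\<Sum>p\<in>subs H. \<alpha> p * sum c (Vsub H p))"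
  proof (intro sum.cong refl)
    fix p assume "p \<in> subs H"
    then have "{v\<in>Vp. v \<in> Vsub H p} = Vsub H p"
      using Vsub_subset by blast
    then show "(\<Sum>v\<in>{v\<in>Vp. v \<in> Vsub H p}. \<alpha> p * c v) = \<alpha> p * sum c (Vsub H p)"
      by (simp add: sum_distrib_left)
  qed
  finally show ?thesis .
qed

lemma dual_feas_best_beta: "\<forall>p\<in>subs H. 0 \<le> \<alpha> p \<Longrightarrow> dual_feas Vp w H \<alpha> (best_beta \<alpha>)"
  unfolding dual_feas_def best_beta_def cost_def load_def by auto

lemma dual_obj_best_beta: "dual_obj Vp C dx b H \<alpha> (best_beta \<alpha>) = dual_value \<alpha>"
  unfolding dual_obj_def dual_value_def rhs_def ..

lemma dual_obj_le_dual_value: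
  assumes "dual_feas Vp w H \<alpha> \<beta>"
  shows "dual_obj Vp C dx b H \<alpha> \<beta> \<le> dual_value \<alpha>"
proof -
  have "\<beta> v \<le> best_beta \<alpha> v" if "v \<in> Vp" for v
    using assms that unfolding dual_feas_def best_beta_def cost_def load_def by auto
  then show ?thesis
    unfolding dual_obj_def dual_value_def rhs_def
    by (intro add_left_mono sum_mono mult_right_mono) auto
qed

lemma dual_obj_le_primal:
  assumes y: "primal_feas Vp C dx b H y" and dual: "dual_feas Vp w H \<alpha> \<beta>"
  shows "dual_obj Vp C dx b H \<alpha> \<beta> \<le> (\<Sum>v\<in>VH H. w v * y v)"
proof -
  have "(\<Sum>p\<in>subs H. \<alpha> p * rhs p) \<le> (\<Sum>p\<in>subs H. \<alpha> p * sum y (Vsub H p))"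
    using y dual unfolding primal_feas_def dual_feas_def rhs_def
    by (intro sum_mono mult_left_mono) auto
  also have "\<dots> = (\<Sum>v\<in>Vp. y v * load \<alpha> v)"
    by (rule sum_mult_load[symmetric])
  finally have "(\<Sum>p\<in>subs H. \<alpha> p * rhs p) \<le> (\<Sum>v\<in>Vp. y v * load \<alpha> v)" .
  moreover have "(\<Sum>v\<in>Vp. \<beta> v * real (b v)) \<le> (\<Sum>v\<in>Vp. \<beta> v * y v)"
    using y dual unfolding primal_feas_def dual_feas_def
    by (intro sum_mono mult_left_mono_neg) auto
  ultimately have "dual_obj Vp C dx b H \<alpha> \<beta> \<le> (\<Sum>v\<in>Vp. y v * load \<alpha> v + \<beta> v * y v)"
    unfolding dual_obj_def rhs_def[symmetric] sum.distrib by linarith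
  also have "\<dots> \<le> (\<Sum>v\<in>Vp. cost v * y v)"
  proof (intro sum_mono)
    fix v assume "v \<in> Vp"
    then have "(load \<alpha> v + \<beta> v) * y v \<le> cost v * y v"
      using y dual unfolding primal_feas_def dual_feas_def cost_def load_def
      by (intro mult_right_mono) auto
    then show "y v * load \<alpha> v + \<beta> v * y v \<le> cost v * y v"
      by (simp add: algebra_simps)
  qed
  also have "\<dots> = (\<Sum>v\<in>VH H. w v * y v)"
    using VH_subset by (intro sum.mono_neutral_cong_right finite_Vp) (auto simp: cost_def)
  finally show ?thesis .
qed

lemma le_Lstar:
  assumes "\<And>y. primal_feas Vp C dx b H y \<Longrightarrow> z \<le> (\<Sum>v\<in>VH H. w v * y v)"
  shows "z \<le> Lstar Vp C dx b w H"
proof -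
  have "primal_feas Vp C dx b H (\<lambda>v. real (b v))"
    unfolding primal_feas_def using rhs_le_sum_b unfolding rhs_def by auto
  then show ?thesis
    unfolding Lstar_def using assms by (intro cInf_greatest) auto
qed

definition w_total :: real where
  "w_total = (\<Sum>v\<in>VH H. w v)"

definition cap :: "(nat \<times> nat \<Rightarrow> real) \<Rightarrow> nat \<times> nat \<Rightarrow> real" where
  "cap \<alpha> p = (if p \<in> subs H then min (\<alpha> p) w_total else 0)"

definition dual_box :: "(nat \<times> nat \<Rightarrow> real) set" where
  "dual_box = PiE UNIV (\<lambda>p. if p \<in> subs H then {0..w_total} else {0})"

lemma cost_le_w_total: "cost v \<le> w_total"
proof -
  have "finite (VH H)"
    using VH_subset finite_Vp finite_subset by blast
  then show ?thesis
    unfolding cost_def w_total_def using w_nonneg VH_subset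
    by (auto intro!: member_le_sum sum_nonneg)
qed

lemma w_total_nonneg: "0 \<le> w_total"
  using cost_nonneg cost_le_w_total order_trans by blast

lemma continuous_on_dual_value: "continuous_on UNIV dual_value"
  unfolding dual_value_def best_beta_def load_def
  by (intro continuous_intros continuous_on_product_coordinates)

lemma compact_dual_box: "compact dual_box"
proof -
  have "compactin (product_topology (\<lambda>_. euclidean) UNIV) dual_box"
    unfolding dual_box_def by (subst compactin_PiE) auto
  then show ?thesis
    by (simp add: euclidean_product_topology)
qed

lemma cap_in_dual_box: "\<forall>p\<in>subs H. 0 \<le> \<alpha> p \<Longrightarrow> cap \<alpha> \<in> dual_box"
  using w_total_nonneg unfolding dual_box_def cap_def by auto

lemma dual_box_nonneg: "\<alpha> \<in> dual_box \<Longrightarrow> \<forall>p\<in>subs H. 0 \<le> \<alpha> p"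
  unfolding dual_box_def PiE_iff by (metis (full_types) UNIV_I atLeastAtMost_iff)

lemma sum_cap_le: "sum (cap \<alpha>) (subs H) \<le> sum \<alpha> (subs H)"
  unfolding cap_def by (intro sum_mono) auto

lemma best_beta_cap:
  assumes nonneg: "\<forall>p\<in>subs H. 0 \<le> \<alpha> p"
  shows "best_beta \<alpha> v + load (\<lambda>p. \<alpha> p - cap \<alpha> p) v \<le> best_beta (cap \<alpha>) v"
proof -
  have load_split: "load \<alpha> v = load (cap \<alpha>) v + load (\<lambda>p. \<alpha> p - cap \<alpha> p) v"
    unfolding load_def by (simp add: sum_subtractf)
  show ?thesis
  proof (cases "\<exists>p\<in>subs H. v \<in> Vsub H p \<and> w_total < \<alpha> p")
    case True
    then obtain p where p: "p \<in> subs H" "v \<in> Vsub H p" "w_total < \<alpha> p"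
      by blast
    have "cost v \<le> cap \<alpha> p"
      using p cost_le_w_total unfolding cap_def by simp
    also have "\<dots> \<le> load (cap \<alpha>) v"
      unfolding load_def using p nonneg w_total_nonneg
      by (intro member_le_sum) (auto simp: cap_def)
    finally have "cost v \<le> load (cap \<alpha>) v" .
    moreover have "0 \<le> load (\<lambda>p. \<alpha> p - cap \<alpha> p) v"
      unfolding load_def cap_def by (intro sum_nonneg) auto
    ultimately show ?thesis
      unfolding best_beta_def load_split by simp
  next
    case False
    then have "load (\<lambda>p. \<alpha> p - cap \<alpha> p) v = 0"
      unfolding load_def cap_def by (intro sum.neutral) auto
    then show ?thesis
      unfolding best_beta_def load_split by simp
  qed
qed

lemma dual_value_le_cap:
  assumes nonneg: "\<forall>p\<in>subs H. 0 \<le> \<alpha> p"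
  shows "dual_value \<alpha> \<le> dual_value (cap \<alpha>)"
proof -
  define \<delta> where "\<delta> p = \<alpha> p - cap \<alpha> p" for p
  have \<delta>_nonneg: "0 \<le> \<delta> p" if "p \<in> subs H" for p
    using that unfolding \<delta>_def cap_def by auto
  note beta_gain = best_beta_cap[OF nonneg, folded \<delta>_def[abs_def]]
  have "(\<Sum>p\<in>subs H. \<delta> p * rhs p) \<le> (\<Sum>p\<in>subs H. \<delta> p * (\<Sum>v\<in>Vsub H p. real (b v)))"
    using rhs_le_sum_b \<delta>_nonneg by (intro sum_mono mult_left_mono) auto
  also have "\<dots> = (\<Sum>v\<in>Vp. real (b v) * load \<delta> v)"
    by (rule sum_mult_load[symmetric])
  finally have rhs_gain: "(\<Sum>p\<in>subs H. \<delta> p * rhs p) \<le> (\<Sum>v\<in>Vp. real (b v) * load \<delta> v)" .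
  have "(\<Sum>v\<in>Vp. best_beta \<alpha> v * real (b v)) + (\<Sum>v\<in>Vp. real (b v) * load \<delta> v)
      \<le> (\<Sum>v\<in>Vp. best_beta (cap \<alpha>) v * real (b v))"
  proof (unfold sum.distrib[symmetric], intro sum_mono)
    fix v
    have "(best_beta \<alpha> v + load \<delta> v) * real (b v) \<le> best_beta (cap \<alpha>) v * real (b v)"
      using beta_gain by (intro mult_right_mono) auto
    then show "best_beta \<alpha> v * real (b v) + real (b v) * load \<delta> v \<le> best_beta (cap \<alpha>) v * real (b v)"
      by (simp add: algebra_simps)
  qed
  moreover have "(\<Sum>p\<in>subs H. \<alpha> p * rhs p) = (\<Sum>p\<in>subs H. cap \<alpha> p * rhs p) + (\<Sum>p\<in>subs H. \<delta> p * rhs p)"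
    unfolding \<delta>_def by (simp add: algebra_simps flip: sum.distrib)
  ultimately show ?thesis
    unfolding dual_value_def using rhs_gain by linarith
qed

lemma exists_lex_max_on_dual_box:
  obtains \<alpha> where "\<alpha> \<in> dual_box"
    and "\<And>\<gamma>. \<gamma> \<in> dual_box \<Longrightarrow> dual_value \<gamma> \<le> dual_value \<alpha>"
    and "\<And>\<gamma>. \<gamma> \<in> dual_box \<Longrightarrow> dual_value \<gamma> = dual_value \<alpha> \<Longrightarrow> sum \<alpha> (subs H) \<le> sum \<gamma> (subs H)"
proof -
  have "dual_box \<noteq> {}"
    using cap_in_dual_box[of "\<lambda>_. 0"] by auto
  then obtain \<alpha>0 where "\<alpha>0 \<in> dual_box" and max: "\<forall>\<gamma>\<in>dual_box. dual_value \<gamma> \<le> dual_value \<alpha>0"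
    using continuous_attains_sup[OF compact_dual_box _ continuous_on_subset[OF continuous_on_dual_value]]
    by blast
  define M where "M = dual_box \<inter> {\<gamma>. dual_value \<gamma> = dual_value \<alpha>0}"
  have "compact M"
    unfolding M_def
    by (intro compact_Int_closed compact_dual_box closed_Collect_eq continuous_on_dual_value
        continuous_on_const)
  moreover have "M \<noteq> {}"
    using \<open>\<alpha>0 \<in> dual_box\<close> unfolding M_def by blast
  moreover have "continuous_on M (\<lambda>\<gamma>. sum \<gamma> (subs H))"
    by (rule continuous_on_subset[OF _ subset_UNIV])
      (intro continuous_intros continuous_on_product_coordinates)
  ultimately obtain \<alpha> where "\<alpha> \<in> M" and "\<forall>\<gamma>\<in>M. sum \<alpha> (subs H) \<le> sum \<gamma> (subs H)"
    by (blast dest: continuous_attains_inf)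
  then show thesis
    using that max unfolding M_def by auto
qed

lemma exists_lex_max_dual_value:
  obtains \<alpha> where "\<forall>p\<in>subs H. 0 \<le> \<alpha> p"
    and "\<And>\<gamma>. \<forall>p\<in>subs H. 0 \<le> \<gamma> p \<Longrightarrow> dual_value \<gamma> \<le> dual_value \<alpha>"
    and "\<And>\<gamma>. \<forall>p\<in>subs H. 0 \<le> \<gamma> p \<Longrightarrow> dual_value \<gamma> = dual_value \<alpha> \<Longrightarrow>
           sum \<alpha> (subs H) \<le> sum \<gamma> (subs H)"
proof -
  obtain \<alpha> where "\<alpha> \<in> dual_box"
    and max: "\<And>\<gamma>. \<gamma> \<in> dual_box \<Longrightarrow> dual_value \<gamma> \<le> dual_value \<alpha>"
    and min: "\<And>\<gamma>. \<gamma> \<in> dual_box \<Longrightarrow> dual_value \<gamma> = dual_value \<alpha> \<Longrightarrow> sum \<alpha> (subs H) \<le> sum \<gamma> (subs H)"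
    by (fact exists_lex_max_on_dual_box)
  have cap_max: "dual_value \<gamma> \<le> dual_value (cap \<gamma>)" "dual_value (cap \<gamma>) \<le> dual_value \<alpha>"
    if "\<forall>p\<in>subs H. 0 \<le> \<gamma> p" for \<gamma>
    using dual_value_le_cap[OF that] max[OF cap_in_dual_box[OF that]] by auto
  show thesis
  proof (rule that)
    show "\<forall>p\<in>subs H. 0 \<le> \<alpha> p"
      using dual_box_nonneg \<open>\<alpha> \<in> dual_box\<close> by blast
    show "dual_value \<gamma> \<le> dual_value \<alpha>" if "\<forall>p\<in>subs H. 0 \<le> \<gamma> p" for \<gamma>
      using cap_max[OF that] by linarith
    show "sum \<alpha> (subs H) \<le> sum \<gamma> (subs H)"
      if "\<forall>p\<in>subs H. 0 \<le> \<gamma> p" "dual_value \<gamma> = dual_value \<alpha>" for \<gamma>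
    proof -
      have "dual_value (cap \<gamma>) = dual_value \<alpha>"
        using cap_max[OF that(1)] that(2) by linarith
      then have "sum \<alpha> (subs H) \<le> sum (cap \<gamma>) (subs H)"
        using min cap_in_dual_box[OF that(1)] by blast
      then show ?thesis
        using sum_cap_le[of \<gamma>] by linarith
    qed
  qed
qed

lemma dual_value_decrease:
  assumes p: "p \<in> subs H" and "0 \<le> \<epsilon>" and T: "T \<subseteq> Vsub H p"
    and slack: "\<forall>v\<in>T. \<epsilon> \<le> load \<alpha> v - cost v"
  shows "dual_value \<alpha> + \<epsilon> * (real (sum b T) - rhs p) \<le> dual_value (\<alpha>(p := \<alpha> p - \<epsilon>))"
proof -
  define \<alpha>' where "\<alpha>' = \<alpha>(p := \<alpha> p - \<epsilon>)"
  have \<alpha>': "\<alpha>' = (\<lambda>q. \<alpha> q - (if q = p then \<epsilon> else 0))"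
    unfolding \<alpha>'_def by auto
  have load': "load \<alpha>' v = load \<alpha> v - (if v \<in> Vsub H p then \<epsilon> else 0)" for v
    unfolding load_def \<alpha>' using p
    by (simp add: sum_subtractf)
  have beta_gain: "best_beta \<alpha> v + (if v \<in> T then \<epsilon> else 0) \<le> best_beta \<alpha>' v" for v
    using \<open>0 \<le> \<epsilon>\<close> T slack unfolding best_beta_def load' by auto
  have "(\<Sum>v\<in>Vp. (if v \<in> T then \<epsilon> else 0) * real (b v)) = (\<Sum>v\<in>T. \<epsilon> * real (b v))"
    using T Vsub_subset[OF p] by (intro sum.mono_neutral_cong_right finite_Vp) auto
  then have "\<epsilon> * real (sum b T) = (\<Sum>v\<in>Vp. (if v \<in> T then \<epsilon> else 0) * real (b v))"
    by (simp add: sum_distrib_left)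
  then have "(\<Sum>v\<in>Vp. best_beta \<alpha> v * real (b v)) + \<epsilon> * real (sum b T)
      \<le> (\<Sum>v\<in>Vp. best_beta \<alpha>' v * real (b v))"
    using beta_gain by (simp flip: sum.distrib distrib_right) (intro sum_mono mult_right_mono; simp)
  moreover have "(\<Sum>q\<in>subs H. \<alpha>' q * rhs q) = (\<Sum>q\<in>subs H. \<alpha> q * rhs q - (if q = p then \<epsilon> * rhs q else 0))"
    unfolding \<alpha>' by (intro sum.cong) (auto simp: left_diff_distrib)
  then have "(\<Sum>q\<in>subs H. \<alpha>' q * rhs q) = (\<Sum>q\<in>subs H. \<alpha> q * rhs q) - \<epsilon> * rhs p"
    using p by (simp add: sum_subtractf)
  ultimately show ?thesis
    unfolding dual_value_def \<alpha>'_def by (simp add: algebra_simps)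
qed

lemma sum_b_overcharged_le:
  assumes nonneg: "\<forall>q\<in>subs H. 0 \<le> \<alpha> q"
    and max: "\<And>\<gamma>. \<forall>q\<in>subs H. 0 \<le> \<gamma> q \<Longrightarrow> dual_value \<gamma> \<le> dual_value \<alpha>"
    and min: "\<And>\<gamma>. \<forall>q\<in>subs H. 0 \<le> \<gamma> q \<Longrightarrow> dual_value \<gamma> = dual_value \<alpha> \<Longrightarrow>
                sum \<alpha> (subs H) \<le> sum \<gamma> (subs H)"
    and p: "p \<in> subs H" and pos: "0 < \<alpha> p"
  shows "real (sum b (overcharged \<alpha> p)) \<le> rhs p - 1"
proof (rule ccontr)
  let ?T = "overcharged \<alpha> p"
  assume "\<not> real (sum b ?T) \<le> rhs p - 1"
  then have "kcap C dx (Vsub H p) - 2 < int (sum b ?T)"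
    unfolding rhs_def by linarith
  then have large: "rhs p \<le> real (sum b ?T)"
    unfolding rhs_def by linarith
  have "finite ?T"
    using finite_Vsub[OF p] unfolding overcharged_def by auto
  define \<epsilon> where "\<epsilon> = Min (insert (\<alpha> p) ((\<lambda>v. load \<alpha> v - cost v) ` ?T))"
  have "0 < \<epsilon>"
    unfolding \<epsilon>_def using \<open>finite ?T\<close> pos by (auto simp: overcharged_def)
  have "\<epsilon> \<le> \<alpha> p" and slack: "\<forall>v\<in>?T. \<epsilon> \<le> load \<alpha> v - cost v"
    unfolding \<epsilon>_def using \<open>finite ?T\<close> by auto
  define \<alpha>' where "\<alpha>' = \<alpha>(p := \<alpha> p - \<epsilon>)"
  have "\<forall>q\<in>subs H. 0 \<le> \<alpha>' q"
    using nonneg \<open>\<epsilon> \<le> \<alpha> p\<close> unfolding \<alpha>'_def by auto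
  moreover have "dual_value \<alpha> \<le> dual_value \<alpha>'"
  proof -
    have "?T \<subseteq> Vsub H p"
      unfolding overcharged_def by auto
    moreover have "0 \<le> \<epsilon> * (real (sum b ?T) - rhs p)"
      using large \<open>0 < \<epsilon>\<close> by simp
    ultimately show ?thesis
      using dual_value_decrease[OF p _ _ slack] \<open>0 < \<epsilon>\<close> unfolding \<alpha>'_def by fastforce
  qed
  ultimately have "sum \<alpha> (subs H) \<le> sum \<alpha>' (subs H)"
    using max min by (simp add: order_antisym)
  also have "\<dots> = sum \<alpha> (subs H) - \<epsilon>"
  proof -
    have "\<alpha>' = (\<lambda>q. \<alpha> q - (if q = p then \<epsilon> else 0))"
      unfolding \<alpha>'_def by auto
    then show ?thesis
      using p finite_subs by (simp add: sum_subtractf)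
  qed
  finally show False
    using \<open>0 < \<epsilon>\<close> by linarith
qed

lemma sum_le_dual_value:
  assumes nonneg: "\<forall>p\<in>subs H. 0 \<le> \<alpha> p"
    and small: "\<And>p. p \<in> subs H \<Longrightarrow> 0 < \<alpha> p \<Longrightarrow> real (sum b (overcharged \<alpha> p)) \<le> rhs p - 1"
  shows "sum \<alpha> (subs H) \<le> dual_value \<alpha>"
proof -
  define c where "c v = (if cost v < load \<alpha> v then real (b v) else 0)" for v
  have "- (\<Sum>v\<in>Vp. c v * load \<alpha> v) \<le> (\<Sum>v\<in>Vp. best_beta \<alpha> v * real (b v))"
    unfolding sum_negf[symmetric] using cost_nonneg
    by (intro sum_mono) (auto simp: c_def best_beta_def left_diff_distrib)
  moreover have "(\<Sum>v\<in>Vp. c v * load \<alpha> v) = (\<Sum>p\<in>subs H. \<alpha> p * real (sum b (overcharged \<alpha> p)))"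
    unfolding sum_mult_load overcharged_def c_def
    by (intro sum.cong) (simp_all add: sum.inter_filter[symmetric] finite_Vsub)
  moreover have "(\<Sum>p\<in>subs H. \<alpha> p * real (sum b (overcharged \<alpha> p))) \<le> (\<Sum>p\<in>subs H. \<alpha> p * (rhs p - 1))"
    using nonneg small by (intro sum_mono) (fastforce simp: order_le_less intro: mult_left_mono)
  ultimately show ?thesis
    unfolding dual_value_def by (simp add: algebra_simps sum_subtractf)
qed

lemma dual_optimum_le_Lstar:
  "\<exists>\<alpha> \<beta>. dual_opt Vp C dx b w H \<alpha> \<beta> \<and>
          sum \<alpha> (subs H) \<le> Lstar Vp C dx b w H \<and>
          (\<forall>v\<in>Vp. w v = 0 \<longrightarrow> (\<Sum>p\<in>{p\<in>subs H. v \<in> Vsub H p}. \<alpha> p) + \<beta> v \<le> 0)"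
proof -
  obtain \<alpha> where nonneg: "\<forall>p\<in>subs H. 0 \<le> \<alpha> p"
    and max: "\<And>\<gamma>. \<forall>p\<in>subs H. 0 \<le> \<gamma> p \<Longrightarrow> dual_value \<gamma> \<le> dual_value \<alpha>"
    and min: "\<And>\<gamma>. \<forall>p\<in>subs H. 0 \<le> \<gamma> p \<Longrightarrow> dual_value \<gamma> = dual_value \<alpha> \<Longrightarrow>
                sum \<alpha> (subs H) \<le> sum \<gamma> (subs H)"
    by (fact exists_lex_max_dual_value)
  have "dual_opt Vp C dx b w H \<alpha> (best_beta \<alpha>)"
    unfolding dual_opt_def dual_obj_best_beta
  proof (intro conjI allI impI)
    show "dual_feas Vp w H \<alpha> (best_beta \<alpha>)"
      by (rule dual_feas_best_beta[OF nonneg])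
    fix \<alpha>' \<beta>' assume feas: "dual_feas Vp w H \<alpha>' \<beta>'"
    then have "\<forall>p\<in>subs H. 0 \<le> \<alpha>' p"
      unfolding dual_feas_def by blast
    then show "dual_obj Vp C dx b H \<alpha>' \<beta>' \<le> dual_value \<alpha>"
      using dual_obj_le_dual_value[OF feas] max order_trans by blast
  qed
  moreover have "sum \<alpha> (subs H) \<le> Lstar Vp C dx b w H"
  proof (rule le_Lstar)
    fix y assume "primal_feas Vp C dx b H y"
    then have "dual_value \<alpha> \<le> (\<Sum>v\<in>VH H. w v * y v)"
      using dual_obj_le_primal dual_feas_best_beta[OF nonneg] by (simp flip: dual_obj_best_beta)
    then show "sum \<alpha> (subs H) \<le> (\<Sum>v\<in>VH H. w v * y v)"
      using sum_le_dual_value[OF nonneg sum_b_overcharged_le[OF nonneg max min]] by linarith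
  qed
  moreover have "\<forall>v\<in>Vp. w v = 0 \<longrightarrow> load \<alpha> v + best_beta \<alpha> v \<le> 0"
    unfolding best_beta_def cost_def by auto
  ultimately show ?thesis
    unfolding load_def by blast
qed

end

theorem lemma8:
  fixes Vp :: "'a set" and C :: real and N :: nat and d :: "nat \<Rightarrow> 'a \<Rightarrow> real"
    and w :: "'a \<Rightarrow> real" and b :: "'a \<Rightarrow> nat" and H :: "'a set list" and \<xi> :: nat
  assumes "finite Vp" and "C > 0"
    and "\<forall>\<zeta>\<in>{1..N}. \<forall>v\<in>Vp. 0 \<le> d \<zeta> v \<and> d \<zeta> v \<le> C \<and> d \<zeta> v \<in> \<rat>"
    and "\<forall>v\<in>Vp. 0 \<le> w v \<and> w v \<in> \<rat>"
    and "\<forall>vs. is_route Vp vs \<longrightarrow> (\<forall>\<zeta>\<in>{1..N}.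
            \<exists>y :: 'a \<Rightarrow> nat. (\<forall>v\<in>Vp. y v \<le> b v) \<and> route_flow_ok C (d \<zeta>) vs y)"
    and "partial_route Vp H" and "\<xi> \<in> {1..N}"
  shows "\<exists>\<alpha> \<beta>. dual_opt Vp C (d \<xi>) b w H \<alpha> \<beta> \<and>
            sum \<alpha> (subs H) \<le> Lstar Vp C (d \<xi>) b w H \<and>
            (\<forall>v\<in>Vp. w v = 0 \<longrightarrow>
               (\<Sum>p\<in>{p\<in>subs H. v \<in> Vsub H p}. \<alpha> p) + \<beta> v \<le> 0)"
proof -
  interpret partial_route_lp Vp C "d \<xi>" b w H
  proof
    show "finite Vp"
      by fact
    show "S \<noteq> {} \<and> S \<subseteq> Vp" if "S \<in> set H" for S
      using assms(6) that unfolding partial_route_def by blast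
    show "0 \<le> w v" if "v \<in> Vp" for v
      using assms(4) that by blast
    show "real_of_int (kcap C (d \<xi>) T) - 1 \<le> real (sum b T)" if "T \<subseteq> Vp" "T \<noteq> {}" for T
      using kcap_minus_one_le_sum_bound[OF assms(2) finite_subset[OF that(1) assms(1)] that(2,1)] assms(5,7)
      by blast
  qed
  show ?thesis
    by (rule dual_optimum_le_Lstar)
qed

end
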